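(* For every nonnegative integer $n$, $$\sum_{F\in F_n}\mathbf{q}^{\operatorname{tinv}(F)}c^{\operatorname{tree}(F)}=\sum_{P\in PF_n}\mathbf{q}^{\operatorname{tjump}(P)}c^{\operatorname{critic}(P)},$$ where $\mathbf{q}=(q_0,q_1,\dots,q_n)$ are indeterminates and $\mathbf{q}^{(v_0,\dots,v_n)}=q_0^{v_0}q_1^{v_1}\cdots q_n^{v_n}$.
   Context: $F_n$ is the set of rooted forests on the vertex set $\{1,\dots,n\}$ (graphs whose components are trees, each with a distinguished root). A vertex $j$ is a descendant of $i$ if $j\neq i$ and $i$ lies on the path from the root of its component to $j$. $\operatorname{inv}(F:v)$ is the number of descendants $x$ of $v$ with $x<v$; $\operatorname{lead}_i(F)$ is the number of vertices $v$ with $\operatorname{inv}(F:v)=i$; $\operatorname{tinv}(F)=(\operatorname{lead}_0(F),\dots,\operatorname{lead}_n(F))$; $\operatorname{tree}(F)$ is the number of trees of $F$. Parking algorithm: for a sequence $(p_1,\dots,p_n)$ of positive integers, cars $1,\dots,n$ park in turn, car $c$ taking the first empty space among $p_c,p_c+1,\dots$; let $q_c$ be its space. $PF_n$ is the set of such sequences with all $q_c\le n$ (parking functions). $\operatorname{jump}(P:c)=q_c-p_c$; $\operatorname{lucky}_i(P)$ is the number of cars with $\operatorname{jump}(P:c)=i$; $\operatorname{tjump}(P)=(\operatorname{lucky}_0(P),\dots,\operatorname{lucky}_n(P))$. A car $c$ is critical if at the moment it parks all spaces $q_c+1,\dots,n$ are occupied; $\operatorname{critic}(P)$ is the number of critical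 cars. *)

theory Defs
  imports Main
begin

text \<open>A rooted forest on vertex set {1..n} is encoded by its parent map
  par :: nat => nat: par v is the parent of v, and par v = 0 iff v is a root.
  Outside {1..n} the map is 0 (so that the encoding is unique).
  Acyclicity: iterating par from any vertex eventually reaches 0 (past a root).\<close>

definition rooted_forests :: "nat \<Rightarrow> (nat \<Rightarrow> nat) set" where
  "rooted_forests n = {par.
      (\<forall>v. v \<notin> {1..n} \<longrightarrow> par v = 0) \<and>
      (\<forall>v\<in>{1..n}. par v \<le> n \<and> (\<exists>k. (par ^^ k) v = 0))}"

definition descendant :: "(nat \<Rightarrow> nat) \<Rightarrow> nat \<Rightarrow> nat \<Rightarrow> bool" where
  "descendant par j i \<longleftrightarrow> j \<noteq> i \<and> i \<noteq> 0 \<and> (\<exists>k\<ge>1. (par ^^ k) j = i)"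

definition inv_f :: "nat \<Rightarrow> (nat \<Rightarrow> nat) \<Rightarrow> nat \<Rightarrow> nat" where
  "inv_f n par v = card {x\<in>{1..n}. descendant par x v \<and> x < v}"

definition lead :: "nat \<Rightarrow> (nat \<Rightarrow> nat) \<Rightarrow> nat \<Rightarrow> nat" where
  "lead n par i = card {v\<in>{1..n}. inv_f n par v = i}"

definition tree_count :: "nat \<Rightarrow> (nat \<Rightarrow> nat) \<Rightarrow> nat" where
  "tree_count n par = card {v\<in>{1..n}. par v = 0}"

definition monom_q :: "nat \<Rightarrow> (nat \<Rightarrow> 'a::comm_semiring_1) \<Rightarrow> (nat \<Rightarrow> nat) \<Rightarrow> 'a" where
  "monom_q n q v = (\<Prod>i\<le>n. q i ^ v i)"

text \<open>Preference sequences are lists; car c (1-based) is list index c-1.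
  park_aux occ prefs returns the spaces taken, given occupied spaces occ.\<close>
fun park_aux :: "nat set \<Rightarrow> nat list \<Rightarrow> nat list" where
  "park_aux occ [] = []"
| "park_aux occ (a # as) =
     (let s = (LEAST s. a \<le> s \<and> s \<notin> occ) in s # park_aux (insert s occ) as)"

definition spaces :: "nat list \<Rightarrow> nat list" where
  "spaces P = park_aux {} P"

definition parking_functions :: "nat \<Rightarrow> nat list set" where
  "parking_functions n = {P. length P = n \<and> (\<forall>x\<in>set P. 1 \<le> x) \<and>
                            (\<forall>s\<in>set (spaces P). s \<le> n)}"

definition jump :: "nat list \<Rightarrow> nat \<Rightarrow> nat" where
  "jump P c = spaces P ! c - P ! c"

definition lucky :: "nat list \<Rightarrow> nat \<Rightarrow> nat" where
  "lucky P i = card {c. c < length P \<and> jump P c = i}"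

definition critical :: "nat \<Rightarrow> nat list \<Rightarrow> nat \<Rightarrow> bool" where
  "critical n P c \<longleftrightarrow> {spaces P ! c + 1 .. n} \<subseteq> set (take c (spaces P))"

definition critic :: "nat \<Rightarrow> nat list \<Rightarrow> nat" where
  "critic n P = card {c. c < length P \<and> critical n P c}"

end

theory Submission
  imports Defs
begin

text \<open>Both sides satisfy the recursion defining \<open>forest_poly\<close> below, in which the
  summand for \<open>k\<close> accounts for a tree of \<open>k + 1\<close> vertices, resp. a last car parking on
  space \<open>k + 1\<close>.

  For forests, fix a vertex \<open>m\<close> and split off the tree \<open>K\<close> containing it, of size
  \<open>k + 1\<close>, and its root \<open>r\<close>. All of \<open>K - {r}\<close> descends from \<open>r\<close>, so \<open>inv r\<close> is the
  rank of \<open>r\<close> in \<open>K\<close>; summing over \<open>r\<close> gives \<open>q\<^sub>0 + \<dots> + q\<^sub>k\<close>. Deleting \<open>r\<close>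
  leaves a forest on \<open>K - {r}\<close> whose trees are not counted by \<open>c\<close>, and the other
  vertices carry an arbitrary forest.

  For parking functions, the last car is critical and may have had any jump \<open>j \<le> k\<close>
  into the last free space \<open>k + 1\<close>. Until then the cars parking below and above that
  space do not interact, so their fillings interleave in \<open>n choose k\<close> ways; the cars
  below are never critical, and the block above is a shifted copy of the whole
  problem.\<close>

fun forest_poly :: "'a::comm_semiring_1 \<Rightarrow> (nat \<Rightarrow> 'a) \<Rightarrow> nat \<Rightarrow> 'a" where
  "forest_poly c q 0 = 1"
| "forest_poly c q (Suc n) = (\<Sum>k\<le>n. of_nat (n choose k) * c * (\<Sum>j\<le>k. q j)
      * forest_poly 1 q k * forest_poly c q (n - k))"

lemma prod_power_card_fibres:
  fixes q :: "nat \<Rightarrow> 'a::comm_monoid_mult"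
  assumes "finite S" "\<forall>a\<in>S. f a \<le> n"
  shows "(\<Prod>i\<le>n. q i ^ card {a\<in>S. f a = i}) = (\<Prod>a\<in>S. q (f a))"
proof -
  have "(\<Prod>a\<in>S. q (f a)) = (\<Prod>i\<le>n. \<Prod>a\<in>{x\<in>S. f x = i}. q (f a))"
    using assms by (intro prod.group[symmetric]) auto
  also have "\<dots> = (\<Prod>i\<le>n. q i ^ card {a\<in>S. f a = i})"
    by (rule prod.cong[OF refl]) simp
  finally show ?thesis by simp
qed

section \<open>Parking functions\<close>

lemma length_park_aux [simp]: "length (park_aux occ xs) = length xs"
  by (induction xs arbitrary: occ) (auto simp: Let_def)

lemma length_spaces [simp]: "length (spaces xs) = length xs"
  by (simp add: spaces_def)

lemma spaces_snoc:
  "spaces (xs @ [p]) = spaces xs @ [LEAST t. p \<le> t \<and> t \<notin> set (spaces xs)]"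
proof -
  have "park_aux occ (xs @ [p]) = park_aux occ xs @ [LEAST t. p \<le> t \<and> t \<notin> occ \<union> set (park_aux occ xs)]"
    for occ by (induction xs arbitrary: occ) (auto simp: Let_def)
  then show ?thesis unfolding spaces_def by simp
qed

lemma exists_free_above: "finite B \<Longrightarrow> \<exists>t::nat. p \<le> t \<and> t \<notin> B"
proof -
  assume "finite B"
  then obtain M where "\<forall>x\<in>B. x \<le> M" using finite_nat_set_iff_bounded_le by blast
  then show ?thesis by (intro exI[of _ "p + M + 1"]) auto
qed

lemma Least_free_eq_iff:
  assumes "finite B"
  shows "(LEAST t::nat. p \<le> t \<and> t \<notin> B) = s \<longleftrightarrow> p \<le> s \<and> s \<notin> B \<and> {p..<s} \<subseteq> B"
proof
  assume h: "(LEAST t::nat. p \<le> t \<and> t \<notin> B) = s"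
  from LeastI_ex[OF exists_free_above[OF assms, of p]] h have "p \<le> s \<and> s \<notin> B" by simp
  moreover have "{p..<s} \<subseteq> B"
  proof
    fix t assume "t \<in> {p..<s}"
    then show "t \<in> B" using not_less_Least[of t "\<lambda>t. p \<le> t \<and> t \<notin> B"] h by auto
  qed
  ultimately show "p \<le> s \<and> s \<notin> B \<and> {p..<s} \<subseteq> B" by blast
next
  assume "p \<le> s \<and> s \<notin> B \<and> {p..<s} \<subseteq> B"
  then show "(LEAST t::nat. p \<le> t \<and> t \<notin> B) = s"
    by (intro Least_equality) (auto simp: subset_iff not_le)
qed

lemma park_aux_distinct_ge:
  "finite occ \<Longrightarrow> distinct (park_aux occ xs) \<and> set (park_aux occ xs) \<inter> occ = {}
     \<and> (\<forall>i<length xs. xs ! i \<le> park_aux occ xs ! i)"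
proof (induction xs arbitrary: occ)
  case (Cons a as)
  define s where "s = (LEAST s. a \<le> s \<and> s \<notin> occ)"
  have "a \<le> s" "s \<notin> occ"
    using LeastI_ex[OF exists_free_above[OF Cons.prems, of a]] s_def by auto
  moreover have "park_aux occ (a # as) = s # park_aux (insert s occ) as"
    by (simp add: s_def Let_def)
  moreover have "distinct (park_aux (insert s occ) as) \<and> set (park_aux (insert s occ) as) \<inter> insert s occ = {}
     \<and> (\<forall>i<length as. as ! i \<le> park_aux (insert s occ) as ! i)"
    using Cons.IH Cons.prems by simp
  ultimately show ?case by (auto simp: nth_Cons split: nat.splits)
qed simp

lemma jump_snoc: "i < length xs \<Longrightarrow> jump (xs @ [p]) i = jump xs i"
  by (simp add: jump_def spaces_snoc nth_append)

lemma critical_snoc: "i < length xs \<Longrightarrow> critical N (xs @ [p]) i = critical N xs i"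
  by (simp add: critical_def spaces_snoc nth_append)

definition pref_weight :: "'a::comm_semiring_1 \<Rightarrow> (nat \<Rightarrow> 'a) \<Rightarrow> nat \<Rightarrow> nat list \<Rightarrow> 'a" where
  "pref_weight c q N P = (\<Prod>i<length P. q (jump P i)) * c ^ critic N P"

lemma pref_weight_snoc:
  assumes "spaces (xs @ [p]) ! length xs = s"
  shows "pref_weight c q N (xs @ [p]) =
    pref_weight c q N xs * q (s - p) * (if {Suc s..N} \<subseteq> set (spaces xs) then c else 1)"
proof -
  have "jump (xs @ [p]) (length xs) = s - p" using assms by (simp add: jump_def)
  then have jumps: "(\<Prod>i<length (xs @ [p]). q (jump (xs @ [p]) i)) = (\<Prod>i<length xs. q (jump xs i)) * q (s - p)"
    by (simp add: jump_snoc)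
  have last_critical: "critical N (xs @ [p]) (length xs) \<longleftrightarrow> {Suc s..N} \<subseteq> set (spaces xs)"
    using assms by (simp add: critical_def spaces_snoc)
  have "{i. i < length (xs @ [p]) \<and> critical N (xs @ [p]) i} =
     {i. i < length xs \<and> critical N xs i} \<union> (if critical N (xs @ [p]) (length xs) then {length xs} else {})"
    by (auto simp: critical_snoc less_Suc_eq)
  then have "critic N (xs @ [p]) = critic N xs + (if critical N (xs @ [p]) (length xs) then 1 else 0)"
    unfolding critic_def by (auto simp: card_insert_if)
  then show ?thesis unfolding pref_weight_def jumps last_critical by (auto simp: algebra_simps)
qed

text \<open>When the spaces \<open>A - {s}\<close> are occupied, a car with preference \<open>s - j\<close> lands
  on \<open>s\<close> exactly if \<open>j \<in> landing_jumps A s\<close>.\<close>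

definition landing_jumps :: "nat set \<Rightarrow> nat \<Rightarrow> nat set" where
  "landing_jumps A s = {j. j < s \<and> {s - j..<s} \<subseteq> A}"

definition crit_weight :: "'a::comm_semiring_1 \<Rightarrow> nat \<Rightarrow> nat set \<Rightarrow> nat \<Rightarrow> 'a" where
  "crit_weight c N A s = (if {Suc s..N} \<subseteq> A then c else 1)"

text \<open>\<open>filling_weight c q N A\<close> sums the jump and criticality weights over all ways
  to fill the spaces \<open>A\<close>, by recursion on the space filled last. The number of steps
  is passed explicitly so that the recursion is primitive.\<close>

primrec filling_weight_steps :: "'a::comm_semiring_1 \<Rightarrow> (nat \<Rightarrow> 'a) \<Rightarrow> nat \<Rightarrow> nat \<Rightarrow> nat set \<Rightarrow> 'a" where
  "filling_weight_steps c q N 0 A = 1"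
| "filling_weight_steps c q N (Suc k) A =
     (\<Sum>s\<in>A. filling_weight_steps c q N k (A - {s}) * sum q (landing_jumps A s) * crit_weight c N A s)"

definition filling_weight :: "'a::comm_semiring_1 \<Rightarrow> (nat \<Rightarrow> 'a) \<Rightarrow> nat \<Rightarrow> nat set \<Rightarrow> 'a" where
  "filling_weight c q N A = filling_weight_steps c q N (card A) A"

lemma filling_weight_empty [simp]: "filling_weight c q N {} = 1"
  by (simp add: filling_weight_def)

lemma filling_weight_rec:
  assumes "finite A" "A \<noteq> {}"
  shows "filling_weight c q N A =
    (\<Sum>s\<in>A. filling_weight c q N (A - {s}) * sum q (landing_jumps A s) * crit_weight c N A s)"
proof -
  obtain k where k: "card A = Suc k" using assms by (cases "card A") auto
  then have "card (A - {s}) = k" if "s \<in> A" for s using that assms by simp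
  then show ?thesis by (simp add: filling_weight_def k cong: sum.cong)
qed

definition prefs_filling :: "nat set \<Rightarrow> nat list set" where
  "prefs_filling A = {P. length P = card A \<and> (\<forall>x\<in>set P. 1 \<le> x) \<and> set (spaces P) = A}"

lemma prefs_filling_empty: "prefs_filling {} = {[]}"
  by (auto simp: prefs_filling_def spaces_def)

lemma snoc_in_prefs_filling:
  assumes "finite A" "0 \<notin> A" "s \<in> A" "xs \<in> prefs_filling (A - {s})" "j \<in> landing_jumps A s"
  shows "spaces (xs @ [s - j]) = spaces xs @ [s]" "xs @ [s - j] \<in> prefs_filling A"
proof -
  have xs: "set (spaces xs) = A - {s}" "length xs = card (A - {s})" "\<forall>x\<in>set xs. 1 \<le> x"
    using assms(4) by (auto simp: prefs_filling_def)
  have "(LEAST t. s - j \<le> t \<and> t \<notin> set (spaces xs)) = s"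
    using assms(1,2,5) xs(1) by (subst Least_free_eq_iff) (auto simp: landing_jumps_def)
  then show spaces: "spaces (xs @ [s - j]) = spaces xs @ [s]" by (simp add: spaces_snoc)
  have "card A = Suc (card (A - {s}))" using assms(1,3) by (metis card_Suc_Diff1)
  then show "xs @ [s - j] \<in> prefs_filling A"
    using spaces xs assms(3,5) by (auto simp: prefs_filling_def landing_jumps_def)
qed

lemma prefs_filling_snocE:
  assumes "finite A" "P \<in> prefs_filling A" "A \<noteq> {}"
  obtains s xs j where "P = xs @ [s - j]" "spaces P = spaces xs @ [s]" "s \<in> A"
    "xs \<in> prefs_filling (A - {s})" "j \<in> landing_jumps A s" "j = s - last P"
proof -
  have P: "length P = card A" "\<forall>x\<in>set P. 1 \<le> x" "set (spaces P) = A"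
    using assms(2) by (auto simp: prefs_filling_def)
  then have "P \<noteq> []" using assms(1,3) by auto
  then obtain xs p where P_eq: "P = xs @ [p]" by (metis append_butlast_last_id)
  define s where "s = (LEAST t. p \<le> t \<and> t \<notin> set (spaces xs))"
  have spaces: "spaces P = spaces xs @ [s]" unfolding P_eq s_def by (simp add: spaces_snoc)
  have ps: "p \<le> s" "s \<notin> set (spaces xs)" "{p..<s} \<subseteq> set (spaces xs)"
    using Least_free_eq_iff[of "set (spaces xs)" p s] s_def by simp_all
  have "s \<in> A" "set (spaces xs) = A - {s}" using P(3) spaces ps(2) by auto
  moreover from this have "card A = Suc (card (A - {s}))" using assms(1) by (metis card_Suc_Diff1)
  ultimately have "xs \<in> prefs_filling (A - {s})" "s - p \<in> landing_jumps A s"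
    using P ps unfolding P_eq prefs_filling_def landing_jumps_def by auto
  moreover have "P = xs @ [s - (s - p)]" using ps(1) P_eq by simp
  ultimately show ?thesis using that spaces \<open>s \<in> A\<close> P_eq by simp
qed

lemma bij_betw_snoc_prefs_filling:
  assumes "finite A" "0 \<notin> A" "A \<noteq> {}"
  shows "bij_betw (\<lambda>(s, xs, j). xs @ [s - j])
    (SIGMA s:A. prefs_filling (A - {s}) \<times> landing_jumps A s) (prefs_filling A)"
proof -
  let ?S = "SIGMA s:A. prefs_filling (A - {s}) \<times> landing_jumps A s"
  define g where "g P = (last (spaces P), butlast P, last (spaces P) - last P)" for P
  show ?thesis
  proof (rule bij_betw_byWitness[where f' = g])
    show "\<forall>t\<in>?S. g (case t of (s, xs, j) \<Rightarrow> xs @ [s - j]) = t"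
      "(\<lambda>(s, xs, j). xs @ [s - j]) ` ?S \<subseteq> prefs_filling A"
      using snoc_in_prefs_filling[OF assms(1,2)] by (auto simp: g_def landing_jumps_def)
    have "g P \<in> ?S \<and> (case g P of (s, xs, j) \<Rightarrow> xs @ [s - j]) = P" if "P \<in> prefs_filling A" for P
      using prefs_filling_snocE[OF assms(1) that assms(3)] by (fastforce simp: g_def)
    then show "\<forall>P\<in>prefs_filling A. (case g P of (s, xs, j) \<Rightarrow> xs @ [s - j]) = P"
      "g ` prefs_filling A \<subseteq> ?S"
      by (simp_all add: image_subset_iff)
  qed
qed

lemma finite_prefs_filling: "finite A \<Longrightarrow> 0 \<notin> A \<Longrightarrow> finite (prefs_filling A)"
proof (induction "card A" arbitrary: A)
  case 0
  then show ?case by (simp add: prefs_filling_empty)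
next
  case (Suc k)
  then have "A \<noteq> {}" "finite (landing_jumps A s)" for s by (auto simp: landing_jumps_def)
  moreover have "finite (prefs_filling (A - {s}))" if "s \<in> A" for s
    using Suc that by (intro Suc.hyps) auto
  ultimately show ?case using bij_betw_snoc_prefs_filling[OF Suc.prems] Suc.prems(1)
    by (metis (no_types, lifting) bij_betw_finite finite_SigmaI)
qed

lemma pref_weight_snoc_landing:
  assumes "finite A" "0 \<notin> A" "s \<in> A" "xs \<in> prefs_filling (A - {s})" "j \<in> landing_jumps A s"
  shows "pref_weight c q N (xs @ [s - j]) = pref_weight c q N xs * q j * crit_weight c N A s"
proof -
  have "spaces (xs @ [s - j]) ! length xs = s"
    using snoc_in_prefs_filling(1)[OF assms] by (simp add: nth_append)
  moreover have "{Suc s..N} \<subseteq> set (spaces xs) \<longleftrightarrow> {Suc s..N} \<subseteq> A"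
    using assms(4) by (auto simp: prefs_filling_def)
  moreover have "s - (s - j) = j" using assms(5) by (auto simp: landing_jumps_def)
  ultimately show ?thesis by (simp add: pref_weight_snoc crit_weight_def)
qed

lemma sum_pref_weight_prefs_filling:
  "finite A \<Longrightarrow> 0 \<notin> A \<Longrightarrow> (\<Sum>P\<in>prefs_filling A. pref_weight c q N P) = filling_weight c q N A"
proof (induction "card A" arbitrary: A)
  case 0
  then show ?case by (simp add: prefs_filling_empty pref_weight_def critic_def)
next
  case (Suc k)
  have ne: "A \<noteq> {}" using Suc.hyps(2) by auto
  have fin: "finite (prefs_filling (A - {s}))" "finite (landing_jumps A s)" for s
    using Suc.prems by (auto simp: finite_prefs_filling landing_jumps_def)
  have "(\<Sum>P\<in>prefs_filling A. pref_weight c q N P)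
      = (\<Sum>(s, xs, j)\<in>(SIGMA s:A. prefs_filling (A - {s}) \<times> landing_jumps A s).
          pref_weight c q N xs * q j * crit_weight c N A s)"
    by (subst sum.reindex_bij_betw[OF bij_betw_snoc_prefs_filling[OF Suc.prems ne], symmetric])
      (auto intro!: sum.cong simp: pref_weight_snoc_landing[OF Suc.prems])
  also have "\<dots> = (\<Sum>s\<in>A. \<Sum>(xs, j)\<in>prefs_filling (A - {s}) \<times> landing_jumps A s.
      pref_weight c q N xs * q j * crit_weight c N A s)"
    using Suc.prems(1) fin by (subst sum.Sigma) (auto simp: split_def)
  also have "\<dots> = (\<Sum>s\<in>A. (\<Sum>xs\<in>prefs_filling (A - {s}). pref_weight c q N xs)
      * sum q (landing_jumps A s) * crit_weight c N A s)"
    by (simp add: sum.cartesian_product[symmetric] sum_product sum_distrib_right[symmetric])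
  also have "\<dots> = filling_weight c q N A"
    using Suc Suc.hyps(1)[of "A - {s}" for s] by (simp add: filling_weight_rec[OF Suc.prems(1) ne])
  finally show ?case .
qed

lemma parking_functions_eq_prefs_filling: "parking_functions n = prefs_filling {1..n}"
proof
  show "parking_functions n \<subseteq> prefs_filling {1..n}"
  proof
    fix P assume "P \<in> parking_functions n"
    then have P: "length P = n" "\<forall>x\<in>set P. 1 \<le> x" "\<forall>s\<in>set (spaces P). s \<le> n"
      by (auto simp: parking_functions_def)
    have spaces: "distinct (spaces P)" "\<forall>i<length P. P ! i \<le> spaces P ! i"
      using park_aux_distinct_ge[of "{}" P] by (auto simp: spaces_def)
    have "set (spaces P) \<subseteq> {1..n}"
    proof
      fix s assume s: "s \<in> set (spaces P)"
      then obtain i where "i < length P" "spaces P ! i = s" by (auto simp: in_set_conv_nth)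
      then show "s \<in> {1..n}" using P spaces(2) s by (metis atLeastAtMost_iff le_trans nth_mem)
    qed
    moreover have "card (set (spaces P)) = n" using spaces(1) P(1) by (simp add: distinct_card)
    ultimately have "set (spaces P) = {1..n}" by (intro card_subset_eq) auto
    then show "P \<in> prefs_filling {1..n}" using P by (simp add: prefs_filling_def)
  qed
  show "prefs_filling {1..n} \<subseteq> parking_functions n"
    by (auto simp: prefs_filling_def parking_functions_def)
qed

lemma parking_sum_eq_filling_weight:
  "(\<Sum>P\<in>parking_functions n. monom_q n q (lucky P) * c ^ critic n P) = filling_weight c q n {1..n}"
proof -
  have "monom_q n q (lucky P) * c ^ critic n P = pref_weight c q n P" if "P \<in> parking_functions n" for P
  proof -
    have "\<forall>i\<in>{..<length P}. jump P i \<le> n"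
      using that unfolding parking_functions_def jump_def
      by (metis (mono_tags, lifting) diff_le_self le_trans length_spaces lessThan_iff mem_Collect_eq nth_mem)
    then have "monom_q n q (lucky P) = (\<Prod>i<length P. q (jump P i))"
      unfolding monom_q_def lucky_def using prod_power_card_fibres[of "{..<length P}" "jump P" n q]
      by (simp add: Collect_conj_eq lessThan_def)
    then show ?thesis by (simp add: pref_weight_def)
  qed
  then have "(\<Sum>P\<in>parking_functions n. monom_q n q (lucky P) * c ^ critic n P)
      = (\<Sum>P\<in>prefs_filling {1..n}. pref_weight c q n P)"
    by (simp add: parking_functions_eq_prefs_filling)
  also have "\<dots> = filling_weight c q n {1..n}" by (simp add: sum_pref_weight_prefs_filling)
  finally show ?thesis .
qed

lemma landing_jumps_Un_lower:
  assumes "\<forall>x\<in>L. x < s" "\<forall>x\<in>U. s < x" "t \<in> L"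
  shows "landing_jumps (L \<union> U) t = landing_jumps L t"
proof -
  have "x \<notin> U" if "x < t" for x using assms that by fastforce
  then show ?thesis by (auto simp: landing_jumps_def subset_iff)
qed

lemma landing_jumps_Un_upper:
  assumes "\<forall>x\<in>L. x < s" "\<forall>x\<in>U. s < x" "t \<in> U"
  shows "landing_jumps (L \<union> U) t = landing_jumps U t"
proof -
  have "{t - j..<t} \<subseteq> L \<union> U \<longleftrightarrow> {t - j..<t} \<subseteq> U" for j
  proof (cases "t - j \<le> s")
    case True
    then have "s \<in> {t - j..<t}" "s \<notin> L \<union> U" using assms by auto
    then show ?thesis by blast
  next
    case False
    then have "x \<notin> L" if "x \<in> {t - j..<t}" for x using assms(1) that by fastforce
    then show ?thesis by blast
  qed
  then show ?thesis by (simp add: landing_jumps_def)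
qed

lemma crit_weight_Un_lower:
  assumes "\<forall>x\<in>L. x < s" "\<forall>x\<in>U. s < x" "t \<in> L" "s \<le> N"
  shows "crit_weight c N (L \<union> U) t = crit_weight c N L t"
proof -
  have "s \<in> {Suc t..N}" "s \<notin> L \<union> U" using assms by auto
  then show ?thesis unfolding crit_weight_def by auto
qed

lemma crit_weight_Un_upper:
  assumes "\<forall>x\<in>L. x < s" "\<forall>x\<in>U. s < x" "t \<in> U"
  shows "crit_weight c N (L \<union> U) t = crit_weight c N U t"
proof -
  have "x \<notin> L" if "x \<in> {Suc t..N}" for x using assms that by fastforce
  then have "{Suc t..N} \<subseteq> L \<union> U \<longleftrightarrow> {Suc t..N} \<subseteq> U" by blast
  then show ?thesis unfolding crit_weight_def by simp
qed

lemma sum_scaled_filling_weight: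
  assumes "finite A" "A \<noteq> {}" "\<And>t. t \<in> A \<Longrightarrow> f t = a * filling_weight c q N (A - {t})"
  shows "(\<Sum>t\<in>A. f t * sum q (landing_jumps A t) * crit_weight c N A t) = a * filling_weight c q N A"
proof -
  have "(\<Sum>t\<in>A. f t * sum q (landing_jumps A t) * crit_weight c N A t)
      = (\<Sum>t\<in>A. a * (filling_weight c q N (A - {t}) * sum q (landing_jumps A t) * crit_weight c N A t))"
    using assms(3) by (intro sum.cong refl) (simp add: mult.assoc)
  then show ?thesis using assms(1,2) by (simp add: filling_weight_rec sum_distrib_left)
qed

lemma filling_weight_Un_rec:
  assumes "finite L" "finite U" "\<forall>x\<in>L. x < s" "\<forall>x\<in>U. s < x" "s \<le> N" "L \<union> U \<noteq> {}"
  shows "filling_weight c q N (L \<union> U) =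
      (\<Sum>t\<in>L. filling_weight c q N ((L - {t}) \<union> U) * sum q (landing_jumps L t) * crit_weight c N L t)
    + (\<Sum>t\<in>U. filling_weight c q N (L \<union> (U - {t})) * sum q (landing_jumps U t) * crit_weight c N U t)"
proof -
  have disj: "L \<inter> U = {}" using assms(3,4) by force
  then have "L \<union> U - {t} = (L - {t}) \<union> U" if "t \<in> L" for t using that by auto
  moreover have "L \<union> U - {t} = L \<union> (U - {t})" if "t \<in> U" for t using that disj by auto
  ultimately show ?thesis
    using assms disj landing_jumps_Un_lower[OF assms(3,4)] crit_weight_Un_lower[OF assms(3,4) _ assms(5), where c = c]
      landing_jumps_Un_upper[OF assms(3,4)] crit_weight_Un_upper[OF assms(3,4), where c = c and N = N]
    by (simp add: filling_weight_rec sum.union_disjoint cong: sum.cong)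
qed

text \<open>While space \<open>s\<close> is free no car filling \<open>L\<close> is critical, and cars filling \<open>L\<close>
  and \<open>U\<close> do not see each other; so the fillings of \<open>L \<union> U\<close> are the shuffles of
  fillings of \<open>L\<close> and of \<open>U\<close>.\<close>

lemma filling_weight_Un:
  fixes c :: "'a::comm_semiring_1"
  shows "finite L \<Longrightarrow> finite U \<Longrightarrow> \<forall>x\<in>L. x < s \<Longrightarrow> \<forall>x\<in>U. s < x \<Longrightarrow> s \<le> N \<Longrightarrow>
    filling_weight c q N (L \<union> U) =
      of_nat (card L + card U choose card L) * filling_weight c q N L * filling_weight c q N U"
proof (induction "card L + card U" arbitrary: L U)
  case (Suc k)
  let ?W = "filling_weight c q N"
  show ?case
  proof (cases "L = {} \<or> U = {}")
    case False
    obtain l where l: "card L = Suc l" using False Suc.prems(1) by (cases "card L") auto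
    have lower: "?W ((L - {t}) \<union> U) = of_nat (k choose l) * ?W U * ?W (L - {t})" if "t \<in> L" for t
      using Suc.hyps(1)[of "L - {t}" U] Suc that l by (simp add: ac_simps)
    have upper: "?W (L \<union> (U - {t})) = of_nat (k choose card L) * ?W L * ?W (U - {t})" if "t \<in> U" for t
    proof -
      have k: "k = card L + card (U - {t})"
        using Suc.hyps(2) Suc.prems(2) that by (metis add_Suc_right card_Suc_Diff1 nat.inject)
      have "\<forall>x\<in>U - {t}. s < x" using Suc.prems(4) by blast
      from Suc.hyps(1)[OF k Suc.prems(1) finite_Diff[OF Suc.prems(2)] Suc.prems(3) this Suc.prems(5)]
      show ?thesis unfolding k .
    qed
    have "?W (L \<union> U) =
        (\<Sum>t\<in>L. ?W ((L - {t}) \<union> U) * sum q (landing_jumps L t) * crit_weight c N L t)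
      + (\<Sum>t\<in>U. ?W (L \<union> (U - {t})) * sum q (landing_jumps U t) * crit_weight c N U t)"
      using False Suc.prems by (intro filling_weight_Un_rec) auto
    also have "\<dots> = of_nat (k choose l) * ?W U * ?W L + of_nat (k choose card L) * ?W L * ?W U"
      using False Suc.prems(1,2) lower upper by (simp add: sum_scaled_filling_weight)
    finally show ?thesis using l Suc.hyps(2) by (simp add: algebra_simps)
  qed auto
qed simp

lemma filling_weight_below_gap:
  fixes c :: "'a::comm_semiring_1"
  shows "finite A \<Longrightarrow> t \<notin> A \<Longrightarrow> t \<le> N \<Longrightarrow> \<forall>x\<in>A. x < t \<Longrightarrow>
    filling_weight c q N A = filling_weight 1 q M A"
proof (induction "card A" arbitrary: A)
  case (Suc k)
  have "crit_weight c N A s = 1" if "s \<in> A" for s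
  proof -
    have "t \<in> {Suc s..N}" "t \<notin> A" using that Suc.prems by auto
    then show ?thesis unfolding crit_weight_def by auto
  qed
  moreover have "filling_weight c q N (A - {s}) = filling_weight 1 q M (A - {s})" if "s \<in> A" for s
    using Suc that by (intro Suc.hyps) auto
  moreover have "A \<noteq> {}" using Suc.hyps(2) by auto
  ultimately show ?case using Suc.prems(1)
    by (simp add: filling_weight_rec crit_weight_def cong: sum.cong)
qed simp

lemma landing_jumps_shift:
  assumes "0 \<notin> A" "s \<in> A"
  shows "landing_jumps ((+) k ` A) (k + s) = landing_jumps A s"
proof -
  have "j < k + s \<and> {k + s - j..<k + s} \<subseteq> (+) k ` A \<longleftrightarrow> j < s \<and> {s - j..<s} \<subseteq> A" for j
  proof (cases "j < s")
    case True
    then have "{k + s - j..<k + s} = (+) k ` {s - j..<s}" by (simp add: add.commute[of s k])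
    then have "{k + s - j..<k + s} \<subseteq> (+) k ` A \<longleftrightarrow> {s - j..<s} \<subseteq> A"
      by (simp add: inj_image_subset_iff del: image_add_atLeastLessThan)
    then show ?thesis using True by simp
  next
    case False
    have "s \<noteq> 0" using assms by metis
    then have "k \<in> {k + s - j..<k + s}" using False by auto
    moreover have "k \<notin> (+) k ` A" using assms(1) by auto
    ultimately show ?thesis using False by blast
  qed
  then show ?thesis by (simp add: landing_jumps_def)
qed

lemma crit_weight_shift: "crit_weight c (N + k) ((+) k ` A) (k + s) = crit_weight c N A s"
proof -
  have "{Suc (k + s)..N + k} \<subseteq> (+) k ` A \<longleftrightarrow> {Suc s..N} \<subseteq> A"
    using inj_image_subset_iff[of "(+) k" "{Suc s..N}" A] by (simp add: ac_simps)
  then show ?thesis by (simp add: crit_weight_def)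
qed

lemma filling_weight_shift:
  "finite A \<Longrightarrow> 0 \<notin> A \<Longrightarrow> filling_weight c q (N + k) ((+) k ` A) = filling_weight c q N A"
proof (induction "card A" arbitrary: A)
  case (Suc m)
  have ne: "A \<noteq> {}" using Suc.hyps(2) by auto
  have "(+) k ` A - {k + s} = (+) k ` (A - {s})" for s by auto
  then have "filling_weight c q (N + k) ((+) k ` A) =
      (\<Sum>s\<in>A. filling_weight c q (N + k) ((+) k ` (A - {s}))
        * sum q (landing_jumps ((+) k ` A) (k + s)) * crit_weight c (N + k) ((+) k ` A) (k + s))"
    using Suc.prems ne by (simp add: filling_weight_rec sum.reindex)
  also have "\<dots> = filling_weight c q N A"
    using Suc Suc.hyps(1)[of "A - {s}" for s] ne
    by (auto simp: filling_weight_rec landing_jumps_shift crit_weight_shift intro!: sum.cong)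
  finally show ?case .
qed simp

lemma filling_weight_interval_Suc:
  "filling_weight c q (Suc n) {1..Suc n} = (\<Sum>k\<le>n. of_nat (n choose k) * c * (\<Sum>j\<le>k. q j)
      * filling_weight 1 q k {1..k} * filling_weight c q (n - k) {1..n - k})"
proof -
  have "filling_weight c q (Suc n) {1..Suc n} = (\<Sum>s\<in>Suc ` {..n}. filling_weight c q (Suc n) ({1..Suc n} - {s})
      * sum q (landing_jumps {1..Suc n} s) * crit_weight c (Suc n) {1..Suc n} s)"
    unfolding image_Suc_atMost by (rule filling_weight_rec) auto
  also have "\<dots> = (\<Sum>k\<le>n. filling_weight c q (Suc n) ({1..Suc n} - {Suc k})
      * sum q (landing_jumps {1..Suc n} (Suc k)) * crit_weight c (Suc n) {1..Suc n} (Suc k))"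
    by (simp add: sum.reindex)
  also have "\<dots> = (\<Sum>k\<le>n. of_nat (n choose k) * c * (\<Sum>j\<le>k. q j)
      * filling_weight 1 q k {1..k} * filling_weight c q (n - k) {1..n - k})"
  proof (rule sum.cong[OF refl])
    fix k assume "k \<in> {..n}"
    then have k: "k \<le> n" by simp
    have "landing_jumps {1..Suc n} (Suc k) = {..k}" using k by (auto simp: landing_jumps_def)
    moreover have "crit_weight c (Suc n) {1..Suc n} (Suc k) = c" by (simp add: crit_weight_def)
    moreover have "{1..Suc n} - {Suc k} = {1..k} \<union> {Suc (Suc k)..Suc n}" using k by auto
    moreover have "filling_weight c q (Suc n) ({1..k} \<union> {Suc (Suc k)..Suc n}) =
        of_nat (n choose k) * filling_weight c q (Suc n) {1..k} * filling_weight c q (Suc n) {Suc (Suc k)..Suc n}"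
      using filling_weight_Un[of "{1..k}" "{Suc (Suc k)..Suc n}" "Suc k" "Suc n" c q] k by simp
    moreover have "filling_weight c q (Suc n) {1..k} = filling_weight 1 q k {1..k}"
      by (rule filling_weight_below_gap[of _ "Suc k"]) (use k in auto)
    moreover have "filling_weight c q (Suc n) {Suc (Suc k)..Suc n} = filling_weight c q (n - k) {1..n - k}"
    proof -
      have "(+) (Suc k) ` {1..n - k} = {Suc (Suc k)..Suc n}" "n - k + Suc k = Suc n"
        by (simp_all only: image_add_atLeastAtMost) (use k in simp_all)
      then show ?thesis using filling_weight_shift[of "{1..n - k}" c q "n - k" "Suc k"] by simp
    qed
    ultimately show "filling_weight c q (Suc n) ({1..Suc n} - {Suc k})
        * sum q (landing_jumps {1..Suc n} (Suc k)) * crit_weight c (Suc n) {1..Suc n} (Suc k)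
      = of_nat (n choose k) * c * (\<Sum>j\<le>k. q j) * filling_weight 1 q k {1..k}
        * filling_weight c q (n - k) {1..n - k}"
      by (simp add: ac_simps atMost_def)
  qed
  finally show ?thesis .
qed

lemma filling_weight_eq_forest_poly: "filling_weight c q n {1..n} = forest_poly c q n"
proof (induction n arbitrary: c rule: less_induct)
  case (less n)
  show ?case
  proof (cases n)
    case (Suc m)
    then show ?thesis unfolding Suc filling_weight_interval_Suc forest_poly.simps
      using less.IH Suc by (intro sum.cong refl) (simp add: le_imp_less_Suc)
  qed simp
qed

section \<open>Rooted forests\<close>

definition forests_on :: "nat set \<Rightarrow> (nat \<Rightarrow> nat) set" where
  "forests_on V = {par. (\<forall>v. v \<notin> V \<longrightarrow> par v = 0) \<and>
      (\<forall>v\<in>V. par v \<in> insert 0 V \<and> (\<exists>k. (par ^^ k) v = 0))}"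

definition inv_on :: "nat set \<Rightarrow> (nat \<Rightarrow> nat) \<Rightarrow> nat \<Rightarrow> nat" where
  "inv_on V par v = card {x\<in>V. descendant par x v \<and> x < v}"

definition forest_weight :: "'a::comm_semiring_1 \<Rightarrow> (nat \<Rightarrow> 'a) \<Rightarrow> nat set \<Rightarrow> 'a" where
  "forest_weight c q V = (\<Sum>par\<in>forests_on V. (\<Prod>v\<in>V. q (inv_on V par v)) * c ^ card {v\<in>V. par v = 0})"

lemma funpow_fixpoint: "f a = a \<Longrightarrow> (f ^^ k) a = a"
  by (induction k) auto

lemma funpow_fixpoint_after:
  assumes "f a = a" "(f ^^ k) x = a" "k \<le> j"
  shows "(f ^^ j) x = a"
proof -
  have "(f ^^ j) x = (f ^^ (j - k)) ((f ^^ k) x)"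
    using assms(3) by (metis funpow_add le_add_diff_inverse2 o_apply)
  then show ?thesis using assms funpow_fixpoint by metis
qed

lemma funpow_closed: "\<forall>v\<in>S. f v \<in> S \<Longrightarrow> v \<in> S \<Longrightarrow> (f ^^ k) v \<in> S"
  by (induction k) auto

lemma funpow_cong_closed:
  assumes "\<forall>v\<in>S. f v = g v" "\<forall>v\<in>S. f v \<in> S" "v \<in> S"
  shows "(g ^^ k) v = (f ^^ k) v"
proof (induction k)
  case (Suc k)
  have "(f ^^ k) v \<in> S" using funpow_closed assms by metis
  then show ?case using Suc assms(1) by simp
qed simp

lemma forests_onD:
  assumes "par \<in> forests_on V" "0 \<notin> V"
  shows "par 0 = 0" "\<And>v. v \<notin> V \<Longrightarrow> par v = 0" "\<And>v. v \<in> V \<Longrightarrow> par v \<in> insert 0 V"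
    "\<And>v. v \<in> V \<Longrightarrow> \<exists>k. (par ^^ k) v = 0" "\<forall>v\<in>insert 0 V. par v \<in> insert 0 V"
  using assms unfolding forests_on_def by auto

lemma finite_forests_on: "finite V \<Longrightarrow> finite (forests_on V)"
proof -
  assume "finite V"
  then have "finite {f. \<forall>x. (x \<in> V \<longrightarrow> f x \<in> insert 0 V) \<and> (x \<notin> V \<longrightarrow> f x = (0::nat))}"
    by (intro finite_set_of_finite_funs) auto
  then show ?thesis by (rule finite_subset[rotated]) (auto simp: forests_on_def)
qed

text \<open>\<open>join_forest\<close> inverts the decomposition of a forest on \<open>V\<close> into the tree \<open>K\<close>
  containing a chosen vertex, its root \<open>r\<close>, the forest left on \<open>K - {r}\<close> after
  deleting \<open>r\<close>, and the forest on \<open>V - K\<close>.\<close>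

definition join_forest :: "nat set \<Rightarrow> nat set \<Rightarrow> nat \<Rightarrow> (nat \<Rightarrow> nat) \<Rightarrow> (nat \<Rightarrow> nat) \<Rightarrow> nat \<Rightarrow> nat" where
  "join_forest V K r F1 F2 = (\<lambda>v. if v \<in> V - K then F2 v else if v \<in> K - {r} then (if F1 v = 0 then r else F1 v) else 0)"

locale forest_join =
  fixes V K :: "nat set" and r :: nat and F1 F2 :: "nat \<Rightarrow> nat"
  assumes tree_subset: "K \<subseteq> V" and root_in_tree: "r \<in> K" and F1: "F1 \<in> forests_on (K - {r})"
    and F2: "F2 \<in> forests_on (V - K)" and zero_notin: "0 \<notin> V"
begin

abbreviation "G \<equiv> join_forest V K r F1 F2"

lemma root_nonzero: "r \<noteq> 0" using root_in_tree tree_subset zero_notin by (metis in_mono)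

lemma join_root: "G r = 0" using root_in_tree by (simp add: join_forest_def)

lemma join_zero: "G 0 = 0"
  using zero_notin tree_subset by (auto simp: join_forest_def)

lemma join_outside: "v \<notin> V \<Longrightarrow> G v = 0"
  using tree_subset by (auto simp: join_forest_def)

lemma join_rest: "v \<in> V - K \<Longrightarrow> G v = F2 v" by (simp add: join_forest_def)

lemma join_tree: "v \<in> K - {r} \<Longrightarrow> G v = (if F1 v = 0 then r else F1 v)" by (simp add: join_forest_def)

lemma F1_zero: "F1 0 = 0" using forests_onD(1)[OF F1] zero_notin tree_subset by auto

lemma F1_outside: "v \<notin> K - {r} \<Longrightarrow> F1 v = 0" using F1 by (simp add: forests_on_def)

lemma F1_maps: "v \<in> K - {r} \<Longrightarrow> F1 v \<in> insert 0 (K - {r})" using F1 by (simp add: forests_on_def)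

lemma F2_maps: "v \<in> V - K \<Longrightarrow> F2 v \<in> insert 0 (V - K)" using F2 by (simp add: forests_on_def)

lemma F2_zero: "F2 0 = 0" using F2 zero_notin by (simp add: forests_on_def)

lemma join_maps_rest: "\<forall>v\<in>insert 0 (V - K). G v \<in> insert 0 (V - K)"
proof
  fix v assume "v \<in> insert 0 (V - K)"
  then consider "v = 0" | "v \<in> V - K" by blast
  then show "G v \<in> insert 0 (V - K)"
  proof cases
    case 1 then show ?thesis using join_zero by simp
  next
    case 2 then show ?thesis using join_rest[OF 2] F2_maps[OF 2] by simp
  qed
qed

lemma join_maps_tree: "\<forall>v\<in>insert 0 K. G v \<in> insert 0 K"
proof
  fix v assume v: "v \<in> insert 0 K"
  show "G v \<in> insert 0 K"
  proof (cases "v \<in> K - {r}")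
    case True
    have "G v = (if F1 v = 0 then r else F1 v)" "F1 v \<in> insert 0 (K - {r})"
      using join_tree[OF True] F1_maps[OF True] by auto
    then show ?thesis using root_in_tree by (cases "F1 v = 0") auto
  next
    case False
    then have "v = 0 \<or> v = r" using v by auto
    then show ?thesis using join_zero join_root by auto
  qed
qed

lemma join_iter_rest: "v \<in> insert 0 (V - K) \<Longrightarrow> (G ^^ k) v = (F2 ^^ k) v"
proof -
  assume v: "v \<in> insert 0 (V - K)"
  have "\<forall>v\<in>insert 0 (V - K). F2 v = G v" using join_zero F2_zero join_rest by auto
  moreover have "\<forall>v\<in>insert 0 (V - K). F2 v \<in> insert 0 (V - K)" using F2_zero F2_maps by auto
  ultimately show ?thesis using funpow_cong_closed[of "insert 0 (V - K)" F2 G v k] v by blast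
qed

lemma join_iter_rest_in: "v \<in> insert 0 (V - K) \<Longrightarrow> (G ^^ k) v \<in> insert 0 (V - K)"
  by (rule funpow_closed[OF join_maps_rest])

lemma join_iter_tree_in: "v \<in> insert 0 K \<Longrightarrow> (G ^^ k) v \<in> insert 0 K"
  by (rule funpow_closed[OF join_maps_tree])

definition depth :: "nat \<Rightarrow> nat" where "depth x = (LEAST k. (F1 ^^ k) x = 0)"

lemma depth_props:
  assumes x: "x \<in> K - {r}"
  shows "(F1 ^^ depth x) x = 0" "0 < depth x" "\<And>j. j < depth x \<Longrightarrow> (F1 ^^ j) x \<noteq> 0"
proof -
  have "\<exists>k. (F1 ^^ k) x = 0" using F1 x by (simp add: forests_on_def)
  then show "(F1 ^^ depth x) x = 0" unfolding depth_def by (rule LeastI_ex)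
  show "\<And>j. j < depth x \<Longrightarrow> (F1 ^^ j) x \<noteq> 0" unfolding depth_def by (rule not_less_Least)
  have "x \<noteq> 0" using x tree_subset zero_notin by (metis DiffD1 in_mono)
  then show "0 < depth x" using \<open>(F1 ^^ depth x) x = 0\<close> by (cases "depth x") auto
qed

lemma F1_iter_in: "x \<in> K - {r} \<Longrightarrow> (F1 ^^ j) x \<in> insert 0 (K - {r})"
  by (rule funpow_closed) (use F1_maps F1_zero in auto)

lemma join_iter_tree:
  assumes x: "x \<in> K - {r}"
  shows "(G ^^ j) x = (if j < depth x then (F1 ^^ j) x else if j = depth x then r else 0)"
proof (induction j)
  case 0
  then show ?case using depth_props[OF x] by simp
next
  case (Suc j)
  show ?case
  proof (cases "Suc j \<le> depth x")
    case True
    then have jl: "j < depth x" by simp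
    have u: "(F1 ^^ j) x \<in> K - {r}" using F1_iter_in[OF x, of j] depth_props(3)[OF x jl] by auto
    have "(G ^^ Suc j) x = G ((F1 ^^ j) x)" using Suc jl by simp
    also have "\<dots> = (if F1 ((F1 ^^ j) x) = 0 then r else F1 ((F1 ^^ j) x))" using join_tree[OF u] .
    also have "\<dots> = (if Suc j < depth x then (F1 ^^ Suc j) x else if Suc j = depth x then r else 0)"
    proof (cases "Suc j < depth x")
      case True
      then show ?thesis using depth_props(3)[OF x True] by simp
    next
      case False
      then have "Suc j = depth x" using \<open>Suc j \<le> depth x\<close> by simp
      then have "(F1 ^^ Suc j) x = 0" using depth_props(1)[OF x] by simp
      then have "F1 ((F1 ^^ j) x) = 0" by simp
      then show ?thesis using \<open>Suc j = depth x\<close> by simp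
    qed
    finally show ?thesis .
  next
    case False
    then have "(G ^^ j) x = r \<or> (G ^^ j) x = 0" using Suc by auto
    then have "(G ^^ Suc j) x = 0" using join_root join_zero by auto
    then show ?thesis using False by simp
  qed
qed

lemma reaches_root: "x \<in> K \<Longrightarrow> \<exists>k. (G ^^ k) x = r"
proof -
  assume x: "x \<in> K"
  show ?thesis
  proof (cases "x = r")
    case True then show ?thesis by (intro exI[of _ 0]) simp
  next
    case False
    then have "(G ^^ depth x) x = r" using join_iter_tree[of x "depth x"] x by simp
    then show ?thesis by blast
  qed
qed

lemma join_in_forests_on: "G \<in> forests_on V"
proof -
  have "\<exists>k. (G ^^ k) v = 0" if v: "v \<in> V" for v
  proof (cases "v \<in> K")
    case True
    then obtain k where "(G ^^ k) v = r" using reaches_root by blast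
    then have "(G ^^ Suc k) v = 0" using join_root by simp
    then show ?thesis by blast
  next
    case False
    then have vv: "v \<in> V - K" using v by simp
    obtain k where "(F2 ^^ k) v = 0" using F2 vv by (auto simp: forests_on_def)
    moreover have "(G ^^ k) v = (F2 ^^ k) v" by (rule join_iter_rest) (use vv in blast)
    ultimately show ?thesis by auto
  qed
  moreover have "G v \<in> insert 0 V" if "v \<in> V" for v
    using join_maps_tree join_maps_rest tree_subset that by (cases "v \<in> K") auto
  ultimately show ?thesis using join_outside unfolding forests_on_def by auto
qed

lemma descendants_rest:
  assumes v: "v \<in> V - K"
  shows "{x\<in>V. descendant G x v \<and> x < v} = {x\<in>V - K. descendant F2 x v \<and> x < v}"
proof (intro set_eqI iffI)
  fix x assume "x \<in> {x\<in>V. descendant G x v \<and> x < v}"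
  then have x: "x \<in> V" "descendant G x v" "x < v" by auto
  then obtain k where k: "k \<ge> 1" "(G ^^ k) x = v" "x \<noteq> v" "v \<noteq> 0" unfolding descendant_def by auto
  have xK: "x \<notin> K"
  proof
    assume "x \<in> K"
    then have "(G ^^ k) x \<in> insert 0 K" by (intro join_iter_tree_in) blast
    then show False using k v by auto
  qed
  then have xx: "x \<in> V - K" using x by blast
  then have "(F2 ^^ k) x = v" using join_iter_rest[of x k] k by auto
  then show "x \<in> {x\<in>V - K. descendant F2 x v \<and> x < v}"
    using xx k x(3) unfolding descendant_def by auto
next
  fix x assume "x \<in> {x\<in>V - K. descendant F2 x v \<and> x < v}"
  then have x: "x \<in> V - K" "descendant F2 x v" "x < v" by auto
  then obtain k where k: "k \<ge> 1" "(F2 ^^ k) x = v" "x \<noteq> v" "v \<noteq> 0" unfolding descendant_def by auto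
  then have "(G ^^ k) x = v" using join_iter_rest[of x k] x by auto
  then show "x \<in> {x\<in>V. descendant G x v \<and> x < v}"
    using x k unfolding descendant_def by auto
qed

lemma join_iter_root: "k \<ge> 1 \<Longrightarrow> (G ^^ k) r = 0"
proof -
  assume k: "k \<ge> 1"
  have "(G ^^ 1) r = 0" using join_root by simp
  then show ?thesis using funpow_fixpoint_after[of G 0 1 r k, OF join_zero _ k] by blast
qed

lemma join_iter_tree_eq_iff:
  assumes x: "x \<in> K - {r}" and v: "v \<in> K - {r}"
  shows "(G ^^ j) x = v \<longleftrightarrow> (F1 ^^ j) x = v"
proof -
  have v0: "v \<noteq> 0" using v tree_subset zero_notin by (metis DiffD1 in_mono)
  consider "j < depth x" | "j = depth x" | "depth x < j" by linarith
  then show ?thesis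
  proof cases
    case 1 then show ?thesis using join_iter_tree[OF x, of j] by simp
  next
    case 2 then show ?thesis using join_iter_tree[OF x, of j] depth_props(1)[OF x] v v0 by auto
  next
    case 3
    have "(F1 ^^ j) x = 0" using funpow_fixpoint_after[OF F1_zero depth_props(1)[OF x]] 3 by simp
    then show ?thesis using join_iter_tree[OF x, of j] 3 v0 by auto
  qed
qed

lemma descendants_tree:
  assumes v: "v \<in> K - {r}"
  shows "{x\<in>V. descendant G x v \<and> x < v} = {x\<in>K - {r}. descendant F1 x v \<and> x < v}"
proof (intro set_eqI iffI)
  fix x assume "x \<in> {x\<in>V. descendant G x v \<and> x < v}"
  then have x: "x \<in> V" "descendant G x v" "x < v" by auto
  then obtain k where k: "k \<ge> 1" "(G ^^ k) x = v" "x \<noteq> v" "v \<noteq> 0" unfolding descendant_def by auto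
  have xK: "x \<in> K"
  proof (rule ccontr)
    assume "x \<notin> K"
    then have "(G ^^ k) x \<in> insert 0 (V - K)" using x by (intro join_iter_rest_in) blast
    then show False using k v by auto
  qed
  have xr: "x \<noteq> r"
  proof
    assume "x = r"
    then show False using join_iter_root[OF k(1)] k by simp
  qed
  then have xx: "x \<in> K - {r}" using xK by blast
  then have "(F1 ^^ k) x = v" using join_iter_tree_eq_iff[OF xx v] k by simp
  then show "x \<in> {x\<in>K - {r}. descendant F1 x v \<and> x < v}"
    using xx k x(3) unfolding descendant_def by auto
next
  fix x assume "x \<in> {x\<in>K - {r}. descendant F1 x v \<and> x < v}"
  then have x: "x \<in> K - {r}" "descendant F1 x v" "x < v" by auto
  then obtain k where k: "k \<ge> 1" "(F1 ^^ k) x = v" "x \<noteq> v" "v \<noteq> 0" unfolding descendant_def by auto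
  then have "(G ^^ k) x = v" using join_iter_tree_eq_iff[OF x(1) v] by simp
  moreover have "x \<in> V" using x tree_subset by blast
  ultimately show "x \<in> {x\<in>V. descendant G x v \<and> x < v}"
    using x k unfolding descendant_def by auto
qed

lemma descendants_root: "{x\<in>V. descendant G x r \<and> x < r} = {x\<in>K. x < r}"
proof (intro set_eqI iffI)
  fix x assume "x \<in> {x\<in>V. descendant G x r \<and> x < r}"
  then have x: "x \<in> V" "descendant G x r" "x < r" by auto
  then obtain k where k: "k \<ge> 1" "(G ^^ k) x = r" unfolding descendant_def by auto
  have xK: "x \<in> K"
  proof (rule ccontr)
    assume "x \<notin> K"
    then have "(G ^^ k) x \<in> insert 0 (V - K)" using x by (intro join_iter_rest_in) blast
    then show False using k root_in_tree root_nonzero by auto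
  qed
  then show "x \<in> {x\<in>K. x < r}" using x by simp
next
  fix x assume "x \<in> {x\<in>K. x < r}"
  then have x: "x \<in> K" "x < r" by auto
  then have xx: "x \<in> K - {r}" by simp
  have "(G ^^ depth x) x = r" using join_iter_tree[OF xx, of "depth x"] by simp
  moreover have "depth x \<ge> 1" using depth_props(2)[OF xx] by simp
  moreover have "x \<in> V" using x tree_subset by blast
  ultimately show "x \<in> {x\<in>V. descendant G x r \<and> x < r}"
    using x root_nonzero unfolding descendant_def by auto
qed

lemma roots_join: "{v\<in>V. G v = 0} = insert r {v\<in>V - K. F2 v = 0}"
proof (intro set_eqI iffI)
  fix v assume "v \<in> {v\<in>V. G v = 0}"
  then have v: "v \<in> V" "G v = 0" by auto
  show "v \<in> insert r {v\<in>V - K. F2 v = 0}"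
  proof (cases "v \<in> K - {r}")
    case True
    then have "G v \<noteq> 0" using join_tree[OF True] root_nonzero by auto
    then show ?thesis using v by simp
  next
    case False
    then show ?thesis using v join_rest by auto
  qed
next
  fix v assume "v \<in> insert r {v\<in>V - K. F2 v = 0}"
  then show "v \<in> {v\<in>V. G v = 0}" using join_root join_rest root_in_tree tree_subset by auto
qed

lemma root_notin_rest_roots: "r \<notin> {v\<in>V - K. F2 v = 0}"
  using root_in_tree by auto

lemma join_weight:
  fixes c :: "'a::comm_semiring_1" and q :: "nat \<Rightarrow> 'a"
  assumes fin: "finite V"
  shows "(\<Prod>v\<in>V. q (inv_on V G v)) * c ^ card {v\<in>V. G v = 0}
    = c * q (card {x\<in>K. x < r}) * (\<Prod>v\<in>K - {r}. q (inv_on (K - {r}) F1 v))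
      * ((\<Prod>v\<in>V - K. q (inv_on (V - K) F2 v)) * c ^ card {v\<in>V - K. F2 v = 0})"
proof -
  have finK: "finite K" using fin tree_subset finite_subset by blast
  have Vs: "V = (V - K) \<union> insert r (K - {r})" using tree_subset root_in_tree by blast
  have "(\<Prod>v\<in>V. q (inv_on V G v)) = (\<Prod>v\<in>V - K. q (inv_on V G v)) * (\<Prod>v\<in>insert r (K - {r}). q (inv_on V G v))"
  proof -
    have "(\<Prod>v\<in>V. q (inv_on V G v)) = (\<Prod>v\<in>(V - K) \<union> insert r (K - {r}). q (inv_on V G v))"
      by (simp only: Vs[symmetric])
    also have "\<dots> = (\<Prod>v\<in>V - K. q (inv_on V G v)) * (\<Prod>v\<in>insert r (K - {r}). q (inv_on V G v))"
      by (rule prod.union_disjoint) (use fin finK root_in_tree in auto)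
    finally show ?thesis .
  qed
  also have "(\<Prod>v\<in>insert r (K - {r}). q (inv_on V G v)) = q (inv_on V G r) * (\<Prod>v\<in>K - {r}. q (inv_on V G v))"
    using finK by (subst prod.insert) auto
  also have "(\<Prod>v\<in>V - K. q (inv_on V G v)) = (\<Prod>v\<in>V - K. q (inv_on (V - K) F2 v))"
    by (rule prod.cong[OF refl]) (simp add: inv_on_def descendants_rest)
  also have "(\<Prod>v\<in>K - {r}. q (inv_on V G v)) = (\<Prod>v\<in>K - {r}. q (inv_on (K - {r}) F1 v))"
    by (rule prod.cong[OF refl]) (simp add: inv_on_def descendants_tree)
  also have "inv_on V G r = card {x\<in>K. x < r}" by (simp add: inv_on_def descendants_root)
  finally have prod: "(\<Prod>v\<in>V. q (inv_on V G v)) = (\<Prod>v\<in>V - K. q (inv_on (V - K) F2 v)) *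
      (q (card {x\<in>K. x < r}) * (\<Prod>v\<in>K - {r}. q (inv_on (K - {r}) F1 v)))" .
  have "card {v\<in>V. G v = 0} = Suc (card {v\<in>V - K. F2 v = 0})"
    unfolding roots_join using fin root_notin_rest_roots by (simp add: card_insert_if)
  then have C: "c ^ card {v\<in>V. G v = 0} = c * c ^ card {v\<in>V - K. F2 v = 0}" by simp
  show ?thesis unfolding prod C by (simp add: ac_simps)
qed

end

lemma reachable_root_unique:
  fixes p :: "nat \<Rightarrow> nat"
  assumes p0: "p 0 = 0" and i: "(p ^^ i) m = r1" and j: "(p ^^ j) m = r2"
    and r1: "r1 \<noteq> 0" "p r1 = 0" and r2: "r2 \<noteq> 0" "p r2 = 0"
  shows "r1 = r2"
proof -
  have gen: "(p ^^ b) m \<noteq> 0 \<Longrightarrow> a < b \<Longrightarrow> p ((p ^^ a) m) \<noteq> 0" for a b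
  proof -
    assume nz: "(p ^^ b) m \<noteq> 0" and ab: "a < b"
    have "(p ^^ b) m = (p ^^ (b - Suc a)) ((p ^^ Suc a) m)"
      using ab by (metis Suc_leI funpow_add le_add_diff_inverse2 o_apply)
    show ?thesis
    proof
      assume "p ((p ^^ a) m) = 0"
      then have "(p ^^ b) m = 0" using \<open>(p ^^ b) m = _\<close> funpow_fixpoint[of p, OF p0] by simp
      then show False using nz by simp
    qed
  qed
  consider "i < j" | "i = j" | "j < i" by linarith
  then show ?thesis
  proof cases
    case 1 then show ?thesis using gen[of j i] i j r1 r2 by simp
  next
    case 2 then show ?thesis using i j by simp
  next
    case 3 then show ?thesis using gen[of i j] i j r1 r2 by simp
  qed
qed

definition root_of :: "(nat \<Rightarrow> nat) \<Rightarrow> nat \<Rightarrow> nat" where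
  "root_of par m = (THE r. r \<noteq> 0 \<and> par r = 0 \<and> (\<exists>k. (par ^^ k) m = r))"

lemma root_of_eqI:
  fixes p :: "nat \<Rightarrow> nat"
  assumes p0: "p 0 = 0" and r: "r \<noteq> 0" "p r = 0" "(p ^^ k) m = r"
  shows "root_of p m = r"
  unfolding root_of_def
proof (rule the_equality)
  show "r \<noteq> 0 \<and> p r = 0 \<and> (\<exists>k. (p ^^ k) m = r)" using r by blast
next
  fix r' assume "r' \<noteq> 0 \<and> p r' = 0 \<and> (\<exists>k. (p ^^ k) m = r')"
  then obtain k' where "r' \<noteq> 0" "p r' = 0" "(p ^^ k') m = r'" by blast
  then show "r' = r" using reachable_root_unique[OF p0 _ r(3)] r by blast
qed

lemma ex_reachable_root:
  fixes p :: "nat \<Rightarrow> nat"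
  assumes p0: "p 0 = 0" and m: "m \<noteq> 0" and k: "(p ^^ k) m = 0"
  shows "\<exists>r k. r \<noteq> 0 \<and> p r = 0 \<and> (p ^^ k) m = r"
proof -
  define k0 where "k0 = (LEAST k. (p ^^ k) m = 0)"
  have k0: "(p ^^ k0) m = 0" unfolding k0_def using k by (rule LeastI)
  have lt: "(p ^^ j) m \<noteq> 0" if "j < k0" for j using that unfolding k0_def by (rule not_less_Least)
  have "k0 \<noteq> 0" using k0 m by (cases k0) auto
  then obtain k1 where k1: "k0 = Suc k1" by (cases k0) auto
  have "(p ^^ k1) m \<noteq> 0" using lt k1 by simp
  moreover have "p ((p ^^ k1) m) = 0" using k0 k1 by simp
  ultimately show ?thesis by blast
qed

definition tree_of :: "nat set \<Rightarrow> (nat \<Rightarrow> nat) \<Rightarrow> nat \<Rightarrow> nat set" where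
  "tree_of V par m = {v\<in>V. \<exists>k. (par ^^ k) v = root_of par m}"

definition subforest_of :: "nat set \<Rightarrow> (nat \<Rightarrow> nat) \<Rightarrow> nat \<Rightarrow> nat \<Rightarrow> nat" where
  "subforest_of V par m = (\<lambda>v. if v \<in> tree_of V par m - {root_of par m} then (if par v = root_of par m then 0 else par v) else 0)"

definition rest_forest_of :: "nat set \<Rightarrow> (nat \<Rightarrow> nat) \<Rightarrow> nat \<Rightarrow> nat \<Rightarrow> nat" where
  "rest_forest_of V par m = (\<lambda>v. if v \<in> V - tree_of V par m then par v else 0)"

locale forest_split =
  fixes V :: "nat set" and par :: "nat \<Rightarrow> nat" and m :: nat
  assumes forest: "par \<in> forests_on V" and zero_notin: "0 \<notin> V" and m_in: "m \<in> V"
begin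

lemma par_zero: "par 0 = 0" using forests_onD(1)[OF forest zero_notin] .

lemma par_iter_in: "v \<in> insert 0 V \<Longrightarrow> (par ^^ k) v \<in> insert 0 V"
  by (rule funpow_closed[OF forests_onD(5)[OF forest zero_notin]])

lemma root_of_props: "root_of par m \<noteq> 0" "par (root_of par m) = 0" "\<exists>k. (par ^^ k) m = root_of par m"
  "root_of par m \<in> V"
proof -
  have m0: "m \<noteq> 0" using m_in zero_notin by (metis)
  obtain k where "(par ^^ k) m = 0" using forests_onD(4)[OF forest zero_notin m_in] by blast
  then obtain r k where r: "r \<noteq> 0" "par r = 0" "(par ^^ k) m = r"
    using ex_reachable_root[of par m, OF par_zero m0] by blast
  then have e: "root_of par m = r" using root_of_eqI[of par r k m, OF par_zero] by blast
  show "root_of par m \<noteq> 0" "par (root_of par m) = 0" "\<exists>k. (par ^^ k) m = root_of par m"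
    using r e by auto
  have "(par ^^ k) m \<in> insert 0 V" using m_in by (intro par_iter_in) blast
  then show "root_of par m \<in> V" using r e by auto
qed

lemma tree_of_props: "tree_of V par m \<subseteq> V" "m \<in> tree_of V par m" "root_of par m \<in> tree_of V par m"
  using root_of_props m_in unfolding tree_of_def by (auto intro: exI[of _ 0])

lemma par_tree:
  assumes v: "v \<in> tree_of V par m - {root_of par m}"
  shows "par v \<in> tree_of V par m" "par v \<noteq> 0"
proof -
  obtain k where k: "(par ^^ k) v = root_of par m" and vV: "v \<in> V" using v unfolding tree_of_def by blast
  have "k \<noteq> 0"
  proof
    assume "k = 0"
    then have "v = root_of par m" using k by simp
    then show False using v by blast
  qed
  then obtain k' where k': "k = Suc k'" by (cases k) auto
  have e: "(par ^^ k') (par v) = root_of par m" using k k' by (simp add: funpow_swap1)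
  show pv0: "par v \<noteq> 0"
  proof
    assume "par v = 0"
    then have "(par ^^ k') (par v) = 0" using funpow_fixpoint[of par, OF par_zero] by simp
    then show False using e root_of_props(1) by simp
  qed
  have "par v \<in> insert 0 V" using forests_onD(3)[OF forest zero_notin vV] .
  then have "par v \<in> V" using pv0 by blast
  then show "par v \<in> tree_of V par m" using e unfolding tree_of_def by blast
qed

lemma par_rest:
  assumes v: "v \<in> V - tree_of V par m"
  shows "par v \<in> insert 0 (V - tree_of V par m)"
proof -
  have pv: "par v \<in> insert 0 V" using forests_onD(3)[OF forest zero_notin] v by blast
  have "par v \<notin> tree_of V par m"
  proof
    assume "par v \<in> tree_of V par m"
    then obtain k where "(par ^^ k) (par v) = root_of par m" unfolding tree_of_def by blast
    then have "(par ^^ Suc k) v = root_of par m" by (simp add: funpow_swap1)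
    then have "v \<in> tree_of V par m" using v unfolding tree_of_def by blast
    then show False using v by blast
  qed
  then show ?thesis using pv by blast
qed

lemma rest_forest_in_forests_on: "rest_forest_of V par m \<in> forests_on (V - tree_of V par m)"
proof -
  let ?S = "insert 0 (V - tree_of V par m)"
  let ?F = "rest_forest_of V par m"
  have F0: "?F 0 = 0" using zero_notin unfolding rest_forest_of_def by auto
  have maps: "\<forall>v\<in>?S. ?F v \<in> ?S"
  proof
    fix v assume "v \<in> ?S"
    then consider "v = 0" | "v \<in> V - tree_of V par m" by blast
    then show "?F v \<in> ?S"
    proof cases
      case 1 then show ?thesis using F0 by simp
    next
      case 2 then show ?thesis using par_rest[OF 2] unfolding rest_forest_of_def by simp
    qed
  qed
  have agr: "\<forall>v\<in>?S. ?F v = par v" using F0 par_zero unfolding rest_forest_of_def by auto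
  have "\<exists>k. (?F ^^ k) v = 0" if v: "v \<in> V - tree_of V par m" for v
  proof -
    obtain k where k: "(par ^^ k) v = 0" using forests_onD(4)[OF forest zero_notin] v by blast
    have "(par ^^ k) v = (?F ^^ k) v" using funpow_cong_closed[OF agr maps, of v k] v by blast
    then show ?thesis using k by metis
  qed
  moreover have "?F v \<in> insert 0 (V - tree_of V par m)" if "v \<in> V - tree_of V par m" for v
    using maps that by blast
  moreover have "?F v = 0" if "v \<notin> V - tree_of V par m" for v
    using that unfolding rest_forest_of_def by (simp only: if_False)
  ultimately show ?thesis unfolding forests_on_def by blast
qed

lemma subforest_in_forests_on: "subforest_of V par m \<in> forests_on (tree_of V par m - {root_of par m})"
proof -
  let ?K = "tree_of V par m" and ?r = "root_of par m" and ?F = "subforest_of V par m"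
  have out: "?F v = 0" if "v \<notin> ?K - {?r}" for v using that unfolding subforest_of_def by (simp only: if_False)
  have inn: "?F v \<in> insert 0 (?K - {?r})" if v: "v \<in> ?K - {?r}" for v
    using par_tree[OF v] v unfolding subforest_of_def by auto
  have "\<exists>j. (?F ^^ j) v = 0" if "(par ^^ k) v = ?r" "v \<in> ?K - {?r}" for k v
    using that
  proof (induction k arbitrary: v)
    case (Suc k)
    show ?case
    proof (cases "par v = ?r")
      case True
      then have "(?F ^^ 1) v = 0" using Suc.prems(2) by (simp add: subforest_of_def)
      then show ?thesis by blast
    next
      case False
      then have "par v \<in> ?K - {?r}" "?F v = par v"
        using par_tree[OF Suc.prems(2)] Suc.prems(2) by (auto simp: subforest_of_def)
      moreover obtain j where "(?F ^^ j) (par v) = 0"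
        using Suc.IH Suc.prems(1) calculation(1) by (metis funpow_Suc_right o_apply)
      ultimately have "(?F ^^ Suc j) v = 0" by (metis funpow_Suc_right o_apply)
      then show ?thesis by blast
    qed
  qed simp
  then have acyc: "\<exists>j. (?F ^^ j) v = 0" if "v \<in> ?K - {?r}" for v
    using that unfolding tree_of_def by blast
  show ?thesis unfolding forests_on_def using out inn acyc by blast
qed

lemma join_split: "join_forest V (tree_of V par m) (root_of par m) (subforest_of V par m) (rest_forest_of V par m) = par"
proof
  fix v
  let ?K = "tree_of V par m" and ?r = "root_of par m"
  show "join_forest V ?K ?r (subforest_of V par m) (rest_forest_of V par m) v = par v"
  proof (cases "v \<in> V - ?K")
    case True then show ?thesis unfolding join_forest_def rest_forest_of_def by simp
  next
    case nVK: False
    show ?thesis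
    proof (cases "v \<in> ?K - {?r}")
      case True
      have "par v \<noteq> 0" using par_tree(2)[OF True] .
      then show ?thesis using True nVK unfolding join_forest_def subforest_of_def by auto
    next
      case False
      then have "v \<notin> V \<or> v = ?r" using nVK by blast
      then have "par v = 0" using root_of_props(2) forests_onD(2)[OF forest zero_notin] by blast
      then show ?thesis using False nVK unfolding join_forest_def by (simp only: if_False)
    qed
  qed
qed

end

context forest_join
begin

lemma root_of_join:
  assumes "m \<in> K"
  shows "root_of G m = r"
proof -
  obtain k where "(G ^^ k) m = r" using reaches_root[OF assms] by blast
  then show ?thesis by (intro root_of_eqI[OF join_zero root_nonzero join_root])
qed

lemma tree_of_join:
  assumes "m \<in> K"
  shows "tree_of V G m = K"
proof (intro set_eqI iffI)
  fix v assume "v \<in> tree_of V G m"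
  then obtain k where v: "v \<in> V" "(G ^^ k) v = r" unfolding tree_of_def root_of_join[OF assms] by blast
  show "v \<in> K"
  proof (rule ccontr)
    assume "v \<notin> K"
    then have "(G ^^ k) v \<in> insert 0 (V - K)" using v by (intro join_iter_rest_in) blast
    then show False using v root_in_tree root_nonzero by auto
  qed
next
  fix v assume "v \<in> K"
  then show "v \<in> tree_of V G m"
    unfolding tree_of_def root_of_join[OF assms] using reaches_root tree_subset by blast
qed

lemma subforest_of_join:
  assumes "m \<in> K"
  shows "subforest_of V G m = F1"
proof
  fix v
  show "subforest_of V G m v = F1 v"
  proof (cases "v \<in> K - {r}")
    case True
    then have "F1 v \<noteq> r" using F1_maps[OF True] root_nonzero by blast
    then show ?thesis using True join_tree[OF True] assms
      by (auto simp: subforest_of_def tree_of_join root_of_join)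
  next
    case False
    then show ?thesis using F1_outside[OF False] assms
      by (auto simp: subforest_of_def tree_of_join root_of_join)
  qed
qed

lemma rest_forest_of_join:
  assumes "m \<in> K"
  shows "rest_forest_of V G m = F2"
proof
  fix v
  show "rest_forest_of V G m v = F2 v"
    using join_rest[of v] F2 assms by (auto simp: rest_forest_of_def tree_of_join forests_on_def)
qed

end

lemma bij_betw_join_forest:
  assumes "0 \<notin> V" "m \<in> V"
  shows "bij_betw (\<lambda>(K, r, F1, F2). join_forest V K r F1 F2)
    (SIGMA K:{K. K \<subseteq> V \<and> m \<in> K}. SIGMA r:K. forests_on (K - {r}) \<times> forests_on (V - K)) (forests_on V)"
proof -
  let ?S = "SIGMA K:{K. K \<subseteq> V \<and> m \<in> K}. SIGMA r:K. forests_on (K - {r}) \<times> forests_on (V - K)"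
  define g where "g par = (tree_of V par m, root_of par m, subforest_of V par m, rest_forest_of V par m)" for par
  show ?thesis
  proof (rule bij_betw_byWitness[where f' = g])
    have join: "forest_join V K r F1 F2" if "(K, r, F1, F2) \<in> ?S" for K r F1 F2
      using that assms by unfold_locales auto
    show "\<forall>t\<in>?S. g (case t of (K, r, F1, F2) \<Rightarrow> join_forest V K r F1 F2) = t"
      "(\<lambda>(K, r, F1, F2). join_forest V K r F1 F2) ` ?S \<subseteq> forests_on V"
      using forest_join.root_of_join[OF join] forest_join.tree_of_join[OF join]
        forest_join.subforest_of_join[OF join] forest_join.rest_forest_of_join[OF join]
        forest_join.join_in_forests_on[OF join]
      by (auto simp: g_def)
    have split: "forest_split V par m" if "par \<in> forests_on V" for par
      using that assms by unfold_locales
    show "\<forall>par\<in>forests_on V. (case g par of (K, r, F1, F2) \<Rightarrow> join_forest V K r F1 F2) = par"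
      "g ` forests_on V \<subseteq> ?S"
      using forest_split.join_split[OF split] forest_split.tree_of_props[OF split]
        forest_split.subforest_in_forests_on[OF split] forest_split.rest_forest_in_forests_on[OF split]
      by (auto simp: g_def)
  qed
qed

lemma forest_weight_rec:
  fixes c :: "'a::comm_semiring_1"
  assumes fin: "finite V" and "0 \<notin> V" "m \<in> V"
  shows "forest_weight c q V = (\<Sum>K\<in>{K. K \<subseteq> V \<and> m \<in> K}. \<Sum>r\<in>K.
            c * q (card {x\<in>K. x < r}) * forest_weight 1 q (K - {r}) * forest_weight c q (V - K))"
proof -
  let ?w = "\<lambda>c U F. (\<Prod>v\<in>U. q (inv_on U F v)) * c ^ card {v\<in>U. F v = 0}"
  let ?Ks = "{K. K \<subseteq> V \<and> m \<in> K}"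
  have finK: "finite ?Ks" "\<forall>K\<in>?Ks. finite K" using fin by (auto intro: finite_subset)
  have finF: "finite (forests_on (K - {r}) \<times> forests_on (V - K))" if "K \<in> ?Ks" for K r
    using that fin finite_subset[of K V] by (simp add: finite_forests_on)
  have "forest_weight c q V = (\<Sum>(K, r, F1, F2)\<in>(SIGMA K:?Ks. SIGMA r:K. forests_on (K - {r}) \<times> forests_on (V - K)).
      c * q (card {x\<in>K. x < r}) * ?w 1 (K - {r}) F1 * ?w c (V - K) F2)"
    unfolding forest_weight_def
    using assms by (subst sum.reindex_bij_betw[OF bij_betw_join_forest, symmetric])
      (auto intro!: sum.cong simp: forest_join.join_weight forest_join_def)
  also have "\<dots> = (\<Sum>K\<in>?Ks. \<Sum>r\<in>K. \<Sum>(F1, F2)\<in>forests_on (K - {r}) \<times> forests_on (V - K).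
      c * q (card {x\<in>K. x < r}) * ?w 1 (K - {r}) F1 * ?w c (V - K) F2)"
    using finK finF by (simp add: sum.Sigma split_def finite_SigmaI)
  also have "\<dots> = (\<Sum>K\<in>?Ks. \<Sum>r\<in>K.
      c * q (card {x\<in>K. x < r}) * forest_weight 1 q (K - {r}) * forest_weight c q (V - K))"
    unfolding forest_weight_def
    by (simp add: sum.cartesian_product[symmetric] sum_product sum_distrib_left ac_simps)
  finally show ?thesis .
qed

lemma bij_betw_rank:
  fixes K :: "'a::linorder set"
  assumes "finite K"
  shows "bij_betw (\<lambda>r. card {x\<in>K. x < r}) K {..<card K}"
proof -
  let ?rank = "\<lambda>r. card {x\<in>K. x < r}"
  have "?rank r < ?rank r'" if "r \<in> K" "r < r'" for r r'
  proof (rule psubset_card_mono)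
    show "finite {x\<in>K. x < r'}" using assms by simp
    show "{x\<in>K. x < r} \<subset> {x\<in>K. x < r'}"
      using that by auto
  qed
  then have "strict_mono_on K ?rank"
    unfolding strict_mono_on_def by blast
  then have inj: "inj_on ?rank K" by (rule strict_mono_on_imp_inj_on)
  have "?rank r < card K" if "r \<in> K" for r
  proof (rule psubset_card_mono)
    show "finite K" by (rule assms)
    show "{x\<in>K. x < r} \<subset> K" using that by blast
  qed
  then have "?rank ` K \<subseteq> {..<card K}" by (simp add: image_subset_iff)
  moreover have "card (?rank ` K) = card {..<card K}"
    using inj by (simp add: card_image)
  ultimately have "?rank ` K = {..<card K}" by (intro card_subset_eq) simp_all
  then show ?thesis using inj by (simp add: bij_betw_def)
qed

lemma sum_rank:
  fixes K :: "'a::linorder set"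
  shows "finite K \<Longrightarrow> (\<Sum>r\<in>K. q (card {x\<in>K. x < r})) = (\<Sum>j<card K. q j)"
  using sum.reindex_bij_betw[OF bij_betw_rank, of K q] by simp

lemma sum_subsets_containing:
  fixes h :: "nat \<Rightarrow> 'a::comm_semiring_1"
  assumes fin: "finite V" and mV: "m \<in> V"
  shows "(\<Sum>K\<in>{K. K \<subseteq> V \<and> m \<in> K}. h (card K)) = (\<Sum>k\<le>card V - 1. of_nat (card V - 1 choose k) * h (Suc k))"
proof -
  let ?A = "V - {m}"
  have finA: "finite ?A" and cA: "card ?A = card V - 1" using fin mV by simp_all
  have "inj_on (insert m) (Pow ?A)" unfolding inj_on_def by blast
  moreover have "insert m ` Pow ?A = {K. K \<subseteq> V \<and> m \<in> K}"
  proof (intro set_eqI iffI)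
    fix K assume "K \<in> {K. K \<subseteq> V \<and> m \<in> K}"
    then have "K = insert m (K - {m})" "K - {m} \<in> Pow ?A" by auto
    then show "K \<in> insert m ` Pow ?A" by blast
  qed (use mV in auto)
  ultimately have "(\<Sum>K\<in>{K. K \<subseteq> V \<and> m \<in> K}. h (card K)) = (\<Sum>K\<in>Pow ?A. h (card (insert m K)))"
    by (metis (no_types, lifting) sum.reindex_cong)
  also have "\<dots> = (\<Sum>K\<in>Pow ?A. h (Suc (card K)))"
  proof (rule sum.cong[OF refl])
    fix K assume "K \<in> Pow ?A"
    then have "m \<notin> K" "finite K" using finA finite_subset by auto
    then show "h (card (insert m K)) = h (Suc (card K))" by simp
  qed
  also have "\<dots> = (\<Sum>k\<le>card ?A. \<Sum>K\<in>{K\<in>Pow ?A. card K = k}. h (Suc (card K)))"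
    using finA by (intro sum.group[symmetric]) (auto simp: card_mono)
  also have "\<dots> = (\<Sum>k\<le>card ?A. of_nat (card ?A choose k) * h (Suc k))"
  proof (rule sum.cong[OF refl])
    fix k
    have "{K\<in>Pow ?A. card K = k} = {K. K \<subseteq> ?A \<and> card K = k}" by auto
    then have "card {K\<in>Pow ?A. card K = k} = card ?A choose k" using n_subsets[OF finA, of k] by simp
    then show "(\<Sum>K\<in>{K\<in>Pow ?A. card K = k}. h (Suc (card K))) = of_nat (card ?A choose k) * h (Suc k)"
      by simp
  qed
  finally show ?thesis unfolding cA .
qed

lemma forest_weight_empty [simp]: "forest_weight c q {} = 1"
proof -
  have "forests_on {} = {\<lambda>v. 0}" unfolding forests_on_def by auto
  then show ?thesis unfolding forest_weight_def by simp
qed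

lemma forest_weight_eq_forest_poly:
  fixes c :: "'a::comm_semiring_1"
  shows "finite V \<Longrightarrow> 0 \<notin> V \<Longrightarrow> forest_weight c q V = forest_poly c q (card V)"
proof (induction "card V" arbitrary: V c rule: less_induct)
  case less
  show ?case
  proof (cases "V = {}")
    case False
    then obtain m n where m: "m \<in> V" and n: "card V = Suc n"
      using less.prems(1) by (metis card_0_eq ex_in_conv not0_implies_Suc)
    define h where "h k = c * (\<Sum>j<k. q j) * forest_poly 1 q (k - 1) * forest_poly c q (card V - k)" for k
    have "(\<Sum>r\<in>K. c * q (card {x\<in>K. x < r}) * forest_weight 1 q (K - {r}) * forest_weight c q (V - K))
        = h (card K)" if K: "K \<subseteq> V" "m \<in> K" for K
    proof -
      have finK: "finite K" using K less.prems(1) by (auto intro: finite_subset)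
      have IH: "forest_weight c' q U = forest_poly c' q (card U)" if "U \<subset> V" for U c'
        using less.hyps[of U c'] less.prems that by (auto intro: psubset_card_mono finite_subset)
      have "forest_weight 1 q (K - {r}) = forest_poly 1 q (card K - 1)" if "r \<in> K" for r
        using IH[of "K - {r}" 1] K that finK by auto
      moreover have "forest_weight c q (V - K) = forest_poly c q (card V - card K)"
        using IH[of "V - K" c] K finK by (auto simp: card_Diff_subset)
      ultimately show ?thesis
        by (simp add: h_def sum_rank[OF finK, symmetric] sum_distrib_left sum_distrib_right ac_simps)
    qed
    then have "forest_weight c q V = (\<Sum>K\<in>{K. K \<subseteq> V \<and> m \<in> K}. h (card K))"
      by (simp add: forest_weight_rec[OF less.prems m])
    also have "\<dots> = forest_poly c q (card V)"
      unfolding sum_subsets_containing[OF less.prems(1) m] by (simp add: n h_def lessThan_Suc_atMost ac_simps)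
    finally show ?thesis .
  qed simp
qed

lemma rooted_forests_sum_eq_forest_weight:
  "(\<Sum>F\<in>rooted_forests n. monom_q n q (lead n F) * c ^ tree_count n F) = forest_weight c q {1..n}"
proof -
  have "(x \<le> n) = (x \<in> insert 0 {1..n})" for x :: nat by auto
  then have forests: "rooted_forests n = forests_on {1..n}"
    unfolding rooted_forests_def forests_on_def by simp
  have "monom_q n q (lead n F) = (\<Prod>v\<in>{1..n}. q (inv_on {1..n} F v))" for F
  proof -
    have "inv_on {1..n} F v \<le> n" for v
      unfolding inv_on_def by (metis (no_types, lifting) card_atLeastAtMost card_mono diff_Suc_1
        finite_atLeastAtMost mem_Collect_eq subsetI)
    then have "(\<Prod>i\<le>n. q i ^ card {v\<in>{1..n}. inv_on {1..n} F v = i}) = (\<Prod>v\<in>{1..n}. q (inv_on {1..n} F v))"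
      by (intro prod_power_card_fibres) auto
    then show ?thesis unfolding monom_q_def lead_def inv_f_def inv_on_def .
  qed
  then show ?thesis unfolding forest_weight_def forests tree_count_def by simp
qed

theorem theorem5p3:
  fixes n :: nat and q :: "nat \<Rightarrow> 'a::comm_semiring_1" and c :: 'a
  shows "(\<Sum>F\<in>rooted_forests n. monom_q n q (lead n F) * c ^ tree_count n F)
       = (\<Sum>P\<in>parking_functions n. monom_q n q (lucky P) * c ^ critic n P)"
proof -
  have "(\<Sum>F\<in>rooted_forests n. monom_q n q (lead n F) * c ^ tree_count n F) = forest_weight c q {1..n}"
    by (rule rooted_forests_sum_eq_forest_weight)
  also have "\<dots> = forest_poly c q n"
    using forest_weight_eq_forest_poly[of "{1..n}" c q] by simp
  also have "\<dots> = filling_weight c q n {1..n}"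
    by (rule filling_weight_eq_forest_poly[symmetric])
  also have "\<dots> = (\<Sum>P\<in>parking_functions n. monom_q n q (lucky P) * c ^ critic n P)"
    by (rule parking_sum_eq_filling_weight[symmetric])
  finally show ?thesis .
qed

end
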